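(* Let $2\le d_1\le d_2\le d_3\le d_4$, let $\rho$ be any (normalized) mixed state on $H_1\otimes H_2\otimes H_3\otimes H_4$ with $\dim H_i=d_i$, let $2\le m\le d_1$, and let $p_2,\dots,p_m\in[0,1]$ with $\sum_{s=2}^mp_s=1$. Then $$C^2(\rho)\ \ge\ \sum_{s=2}^{m}\frac{p_s}{\binom{d_1-2}{s-2}\binom{d_2-2}{s-2}\binom{d_3-1}{s-1}\binom{d_4-1}{s-1}}\sum_{\rho_{s\otimes s\otimes s\otimes s}}C^2(\rho_{s\otimes s\otimes s\otimes s}),$$ where for each $s$ the inner sum runs over all possible $s\otimes s\otimes s\otimes s$ substates of $\rho$.
   Context: Each $H_i\cong\mathbb{C}^{d_i}$ has a fixed computational basis. $C$ denotes the four-partite concurrence: for a (not necessarily normalized) vector $|\varphi\rangle$ with $\sigma=|\varphi\rangle\langle\varphi|$, $C(|\varphi\rangle)=2^{-1}\sqrt{14(\mathrm{tr}\,\sigma)^2-\sum_\alpha\mathrm{tr}(\sigma_\alpha^2)}$, $\alpha$ running over the 14 nonempty proper subsets of $\{1,2,3,4\}$ and $\sigma_\alpha=\mathrm{tr}_{\bar\alpha}\sigma$; for a (possibly unnormalized) positive semidefinite $\sigma$, $C(\sigma)=\min\sum_iC(|\psi_i\rangle)$ over all decompositions $\sigma=\sum_i|\psi_i\rangle\langle\psi_i|$ into unnormalized vectors. Substates: given subsets $S_i\subseteq\{1,\dots,d_i\}$ with $|S_i|=s$ and projectors $G_i=\sum_{x\in S_i}|x\rangle\langle x|$, the $s\otimes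 s\otimes s\otimes s$ substate of $\rho$ is the unnormalized operator $(G_1\otimes G_2\otimes G_3\otimes G_4)\rho(G_1\otimes G_2\otimes G_3\otimes G_4)$. $\binom{n}{k}=n!/(k!(n-k)!)$. *)

theory Defs
  imports Complex_Main
begin

text \<open>Four parties, indexed 0,1,2,3. The local dimensions are d 0, d 1, d 2, d 3.
  A multi-index is a function nat \<Rightarrow> nat; only coordinates in the relevant set of
  parties matter, all others are 0. Vectors are functions from multi-indices to complex,
  operators are kernels (matrices) indexed by pairs of multi-indices.\<close>

type_synonym midx = "nat \<Rightarrow> nat"
type_synonym qvec = "midx \<Rightarrow> complex"
type_synonym qop = "midx \<Rightarrow> midx \<Rightarrow> complex"

definition parties :: "nat set" where
  "parties = {0..3}"

text \<open>Computational basis of the tensor product of the spaces of the parties in A.\<close>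
definition box :: "(nat \<Rightarrow> nat) \<Rightarrow> nat set \<Rightarrow> midx set" where
  "box d A = {i. (\<forall>k\<in>A. i k < d k) \<and> (\<forall>k. k \<notin> A \<longrightarrow> i k = 0)}"

definition merge :: "nat set \<Rightarrow> midx \<Rightarrow> midx \<Rightarrow> midx" where
  "merge A a b = (\<lambda>k. if k \<in> A then a k else b k)"

text \<open>Reduced operator sigma_A = tr_{complement of A} sigma.\<close>
definition ptrace :: "(nat \<Rightarrow> nat) \<Rightarrow> nat set \<Rightarrow> qop \<Rightarrow> qop" where
  "ptrace d A \<sigma> a a' = (\<Sum>b\<in>box d (parties - A). \<sigma> (merge A a b) (merge A a' b))"

definition trace_op :: "(nat \<Rightarrow> nat) \<Rightarrow> qop \<Rightarrow> complex" where
  "trace_op d \<sigma> = (\<Sum>i\<in>box d parties. \<sigma> i i)"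

definition tr_sq_red :: "(nat \<Rightarrow> nat) \<Rightarrow> nat set \<Rightarrow> qop \<Rightarrow> complex" where
  "tr_sq_red d A \<sigma> = (\<Sum>a\<in>box d A. \<Sum>a'\<in>box d A. ptrace d A \<sigma> a a' * ptrace d A \<sigma> a' a)"

definition outer :: "qvec \<Rightarrow> qop" where
  "outer \<phi> i j = \<phi> i * cnj (\<phi> j)"

definition bipartitions :: "nat set set" where
  "bipartitions = {A. A \<subseteq> parties \<and> A \<noteq> {} \<and> A \<noteq> parties}"

definition conc_pure :: "(nat \<Rightarrow> nat) \<Rightarrow> qvec \<Rightarrow> real" where
  "conc_pure d \<phi> = (let \<sigma> = outer \<phi> in
     (1/2) * sqrt (14 * (Re (trace_op d \<sigma>))\<^sup>2 - (\<Sum>A\<in>bipartitions. Re (tr_sq_red d A \<sigma>))))"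

text \<open>Concurrence of a (possibly unnormalized) positive semidefinite operator:
  the infimum (the paper's min) over all finite decompositions
  sigma = sum_k |psi_k><psi_k| into unnormalized vectors.\<close>
definition conc_mixed :: "(nat \<Rightarrow> nat) \<Rightarrow> qop \<Rightarrow> real" where
  "conc_mixed d \<sigma> = Inf {(\<Sum>k<n. conc_pure d (\<psi> k)) | n (\<psi> :: nat \<Rightarrow> qvec).
      \<forall>i\<in>box d parties. \<forall>j\<in>box d parties. \<sigma> i j = (\<Sum>k<n. \<psi> k i * cnj (\<psi> k j))}"

definition density_op :: "(nat \<Rightarrow> nat) \<Rightarrow> qop \<Rightarrow> bool" where
  "density_op d \<rho> \<longleftrightarrow>
     (\<forall>i\<in>box d parties. \<forall>j\<in>box d parties. \<rho> j i = cnj (\<rho> i j)) \<and>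
     (\<forall>v::qvec. Re (\<Sum>i\<in>box d parties. \<Sum>j\<in>box d parties. cnj (v i) * \<rho> i j * v j) \<ge> 0) \<and>
     trace_op d \<rho> = 1"

definition subset_choices :: "(nat \<Rightarrow> nat) \<Rightarrow> nat \<Rightarrow> (nat \<Rightarrow> nat set) set" where
  "subset_choices d s = {S. (\<forall>k\<in>parties. S k \<subseteq> {..<d k} \<and> card (S k) = s) \<and>
                            (\<forall>k. k \<notin> parties \<longrightarrow> S k = {})}"

text \<open>The substate (G_1 \<otimes> G_2 \<otimes> G_3 \<otimes> G_4) rho (G_1 \<otimes> G_2 \<otimes> G_3 \<otimes> G_4).\<close>
definition substate :: "(nat \<Rightarrow> nat set) \<Rightarrow> qop \<Rightarrow> qop" where
  "substate S \<rho> i j = (if (\<forall>k\<in>parties. i k \<in> S k \<and> j k \<in> S k) then \<rho> i j else 0)"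

end

theory Submission
  imports Defs "HOL-Analysis.L2_Norm" "HOL-Library.FuncSet"
begin

text \<open>For a pure vector \<open>\<psi>\<close> and a bipartition \<open>A | \<bar>A\<close>, \<open>(tr \<sigma>)\<^sup>2 - tr \<sigma>\<^sub>A\<^sup>2\<close> is half the sum
  of the squared moduli of the \<open>2 \<times> 2\<close> minors of \<open>\<psi>\<close> viewed as an \<open>A \<times> \<bar>A\<close> matrix, so \<open>C\<^sup>2(\<psi>)\<close>
  is one eighth of the sum of all these squared minors. A minor survives in a substate only if
  the substate contains both multi-indices involved, and a nonvanishing minor involves two
  multi-indices that differ in some party of \<open>A\<close> and in some party outside \<open>A\<close>; at most \<open>N\<^sub>s\<close>
  substates contain two such multi-indices, whence \<open>\<Sum>\<^sub>S C\<^sup>2(\<psi>\<^sub>S) \<le> N\<^sub>s C\<^sup>2(\<psi>)\<close>.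
  A decomposition \<open>\<rho> = \<Sum>\<^sub>k |\<psi>\<^sub>k\<rangle>\<langle>\<psi>\<^sub>k|\<close> (which exists by a Cholesky factorisation) projects to
  decompositions of all substates, so Minkowski's inequality in \<open>\<ell>\<^sup>2\<close> over the substates gives
  \<open>(\<Sum>\<^sub>S C\<^sup>2(\<rho>\<^sub>S))\<^sup>1\<^sup>/\<^sup>2 \<le> N\<^sub>s\<^sup>1\<^sup>/\<^sup>2 \<Sum>\<^sub>k C(\<psi>\<^sub>k)\<close>; taking the infimum over decompositions and
  averaging over \<open>s\<close> with the weights \<open>p\<^sub>s\<close> gives the corollary.\<close>

lemma parties_eq: "parties = {0, 1, 2, 3}"
  by (auto simp: parties_def)

lemma finite_parties [simp]: "finite parties"
  by (simp add: parties_def)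

lemma finite_box:
  assumes "finite A"
  shows "finite (box d A)"
proof (rule finite_subset[OF _ finite_set_of_finite_funs])
  show "box d A \<subseteq> {f. \<forall>k. (k \<in> A \<longrightarrow> f k \<in> (\<Union>k\<in>A. {..<d k})) \<and> (k \<notin> A \<longrightarrow> f k = 0)}"
    by (auto simp: box_def)
qed (use assms in auto)

lemma bij_betw_merge_box:
  assumes "A \<subseteq> parties"
  shows "bij_betw (\<lambda>(a, b). merge A a b) (box d A \<times> box d (parties - A)) (box d parties)"
  by (rule bij_betw_byWitness[where f' = "\<lambda>i. (\<lambda>k. if k \<in> A then i k else 0, \<lambda>k. if k \<in> A then 0 else i k)"])
    (use assms in \<open>auto simp: merge_def box_def fun_eq_iff\<close>)

lemma sum_box_merge:
  assumes "A \<subseteq> parties"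
  shows "(\<Sum>i\<in>box d parties. f i) = (\<Sum>a\<in>box d A. \<Sum>b\<in>box d (parties - A). f (merge A a b))"
  using sum.reindex_bij_betw[OF bij_betw_merge_box[OF assms], of f]
  by (simp add: sum.cartesian_product split_def)

lemma box_neq_ex_coord:
  assumes "a \<in> box d A" "a' \<in> box d A" "a \<noteq> a'"
  shows "\<exists>k\<in>A. a k \<noteq> a' k"
proof (rule ccontr)
  assume "\<not> ?thesis"
  then have "a k = a' k" for k
    using assms(1,2) by (cases "k \<in> A") (auto simp: box_def)
  then show False
    using assms(3) by auto
qed

lemma card_bipartitions: "card bipartitions = 14"
proof -
  have "bipartitions = Pow parties - {{}, parties}"
    by (auto simp: bipartitions_def)
  moreover have "card (Pow parties) = 16"
    by (simp add: card_Pow parties_def)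
  moreover have "card {{}, parties} = 2"
    by (simp add: parties_def)
  moreover have "card (Pow parties - {{}, parties}) = card (Pow parties) - card {{}, parties}"
    by (rule card_Diff_subset) auto
  ultimately show ?thesis
    by simp
qed

text \<open>A vector is read as a matrix whose rows are indexed by the coordinates in \<open>A\<close> and whose
  columns are indexed by the complementary coordinates; these are its \<open>2 \<times> 2\<close> minors.\<close>

definition minor :: "nat set \<Rightarrow> qvec \<Rightarrow> midx \<Rightarrow> midx \<Rightarrow> midx \<Rightarrow> midx \<Rightarrow> complex" where
  "minor A \<psi> a a' b b' = \<psi> (merge A a b) * \<psi> (merge A a' b') - \<psi> (merge A a b') * \<psi> (merge A a' b)"

definition minor_sum :: "(nat \<Rightarrow> nat) \<Rightarrow> nat set \<Rightarrow> qvec \<Rightarrow> real" where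
  "minor_sum d A \<psi> = (\<Sum>a\<in>box d A. \<Sum>a'\<in>box d A. \<Sum>b\<in>box d (parties - A). \<Sum>b'\<in>box d (parties - A).
      (cmod (minor A \<psi> a a' b b'))\<^sup>2)"

lemma minor_sum_nonneg: "0 \<le> minor_sum d A \<psi>"
  unfolding minor_sum_def by (intro sum_nonneg) auto

text \<open>Expanding \<open>|X - Y|\<^sup>2\<close>, both square terms sum to \<open>(tr \<sigma>)\<^sup>2\<close> (after exchanging \<open>b\<close> and \<open>b'\<close>
  in the second) and both cross terms sum to \<open>tr \<sigma>\<^sub>A\<^sup>2\<close>.\<close>

lemma minor_sum_eq:
  assumes A: "A \<subseteq> parties"
  shows "complex_of_real (minor_sum d A \<psi>) = 2 * ((trace_op d (outer \<psi>))\<^sup>2 - tr_sq_red d A (outer \<psi>))"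
proof -
  define Ba where "Ba = box d A"
  define Bb where "Bb = box d (parties - A)"
  define X where "X a a' b b' = \<psi> (merge A a b) * \<psi> (merge A a' b')" for a a' b b'
  define Y where "Y a a' b b' = \<psi> (merge A a b') * \<psi> (merge A a' b)" for a a' b b'
  define sum4 where "sum4 g = (\<Sum>a\<in>Ba. \<Sum>a'\<in>Ba. \<Sum>b\<in>Bb. \<Sum>b'\<in>Bb. g a a' b b')"
    for g :: "midx \<Rightarrow> midx \<Rightarrow> midx \<Rightarrow> midx \<Rightarrow> complex"
  have "complex_of_real (minor_sum d A \<psi>) = sum4 (\<lambda>a a' b b'. (X a a' b b' - Y a a' b b') * cnj (X a a' b b' - Y a a' b b'))"
    unfolding minor_sum_def sum4_def
    by (simp only: of_real_sum complex_norm_square) (simp add: minor_def X_def Y_def Ba_def Bb_def)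
  also have "\<dots> = sum4 (\<lambda>a a' b b'. X a a' b b' * cnj (X a a' b b')) + sum4 (\<lambda>a a' b b'. Y a a' b b' * cnj (Y a a' b b'))
     - sum4 (\<lambda>a a' b b'. X a a' b b' * cnj (Y a a' b b')) - sum4 (\<lambda>a a' b b'. Y a a' b b' * cnj (X a a' b b'))"
    unfolding sum4_def by (simp add: algebra_simps sum.distrib sum_subtractf)
  also have "sum4 (\<lambda>a a' b b'. Y a a' b b' * cnj (Y a a' b b')) = sum4 (\<lambda>a a' b b'. X a a' b b' * cnj (X a a' b b'))"
    unfolding sum4_def X_def Y_def
    by (rule sum.cong[OF refl], rule sum.cong[OF refl], subst sum.swap) (simp add: algebra_simps)
  also have "sum4 (\<lambda>a a' b b'. Y a a' b b' * cnj (X a a' b b')) = sum4 (\<lambda>a a' b b'. X a a' b b' * cnj (Y a a' b b'))"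
    unfolding sum4_def X_def Y_def
    by (rule sum.cong[OF refl], rule sum.cong[OF refl], subst sum.swap) (simp add: algebra_simps)
  also have "sum4 (\<lambda>a a' b b'. X a a' b b' * cnj (X a a' b b')) = (trace_op d (outer \<psi>))\<^sup>2"
  proof -
    have "trace_op d (outer \<psi>) = (\<Sum>a\<in>Ba. \<Sum>b\<in>Bb. \<psi> (merge A a b) * cnj (\<psi> (merge A a b)))"
      unfolding trace_op_def using sum_box_merge[OF A] by (simp add: outer_def Ba_def Bb_def)
    then have "(trace_op d (outer \<psi>))\<^sup>2 = (\<Sum>a\<in>Ba. \<Sum>b\<in>Bb. \<Sum>a'\<in>Ba. \<Sum>b'\<in>Bb. X a a' b b' * cnj (X a a' b b'))"
      unfolding power2_eq_square X_def
      by (simp only: sum_distrib_left sum_distrib_right) (intro sum.cong refl; simp add: algebra_simps)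
    also have "\<dots> = sum4 (\<lambda>a a' b b'. X a a' b b' * cnj (X a a' b b'))"
      unfolding sum4_def by (rule sum.cong[OF refl], rule sum.swap)
    finally show ?thesis by simp
  qed
  also have "sum4 (\<lambda>a a' b b'. X a a' b b' * cnj (Y a a' b b')) = tr_sq_red d A (outer \<psi>)"
    unfolding sum4_def tr_sq_red_def ptrace_def X_def Y_def Ba_def Bb_def
    by (simp only: sum_product) (intro sum.cong refl; simp add: outer_def algebra_simps)
  finally show ?thesis by simp
qed

lemma trace_outer: "trace_op d (outer \<psi>) = complex_of_real (\<Sum>i\<in>box d parties. (cmod (\<psi> i))\<^sup>2)"
  unfolding trace_op_def outer_def of_real_sum by (simp only: complex_norm_square)

lemma Re_tr_sq_red_outer:
  assumes "A \<subseteq> parties"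
  shows "Re (tr_sq_red d A (outer \<psi>)) = (Re (trace_op d (outer \<psi>)))\<^sup>2 - minor_sum d A \<psi> / 2"
proof -
  have "minor_sum d A \<psi> = 2 * (Re ((trace_op d (outer \<psi>))\<^sup>2) - Re (tr_sq_red d A (outer \<psi>)))"
    using arg_cong[OF minor_sum_eq[OF assms], of Re] by simp
  moreover have "Re ((trace_op d (outer \<psi>))\<^sup>2) = (Re (trace_op d (outer \<psi>)))\<^sup>2"
    unfolding trace_outer by (simp only: of_real_power[symmetric] Re_complex_of_real)
  ultimately show ?thesis by (simp add: field_simps)
qed

lemma conc_pure_eq_minor_sum:
  "conc_pure d \<psi> = 1/2 * sqrt ((\<Sum>A\<in>bipartitions. minor_sum d A \<psi>) / 2)"
proof -
  have "(\<Sum>A\<in>bipartitions. Re (tr_sq_red d A (outer \<psi>)))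
      = (\<Sum>A\<in>bipartitions. (Re (trace_op d (outer \<psi>)))\<^sup>2 - minor_sum d A \<psi> / 2)"
    by (intro sum.cong refl Re_tr_sq_red_outer) (auto simp: bipartitions_def)
  also have "\<dots> = 14 * (Re (trace_op d (outer \<psi>)))\<^sup>2 - (\<Sum>A\<in>bipartitions. minor_sum d A \<psi>) / 2"
    by (simp add: sum_subtractf card_bipartitions sum_divide_distrib)
  finally show ?thesis
    unfolding conc_pure_def Let_def by simp
qed

lemma conc_pure_nonneg: "0 \<le> conc_pure d \<psi>"
  by (simp add: conc_pure_eq_minor_sum sum_nonneg minor_sum_nonneg)

lemma conc_pure_sq: "(conc_pure d \<psi>)\<^sup>2 = (\<Sum>A\<in>bipartitions. minor_sum d A \<psi>) / 8"
proof -
  have "(sqrt ((\<Sum>A\<in>bipartitions. minor_sum d A \<psi>) / 2))\<^sup>2 = (\<Sum>A\<in>bipartitions. minor_sum d A \<psi>) / 2"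
    by (simp add: sum_nonneg minor_sum_nonneg)
  then show ?thesis
    by (simp add: conc_pure_eq_minor_sum power_mult_distrib power_divide)
qed

lemma card_supersets:
  assumes "finite M" "B \<subseteq> M" "card B \<le> s"
  shows "card {T. B \<subseteq> T \<and> T \<subseteq> M \<and> card T = s} = (card M - card B) choose (s - card B)"
proof -
  have fB: "finite B"
    using assms finite_subset by blast
  have "bij_betw (\<lambda>T. T - B) {T. B \<subseteq> T \<and> T \<subseteq> M \<and> card T = s} {U. U \<subseteq> M - B \<and> card U = s - card B}"
  proof (rule bij_betw_byWitness[where f' = "\<lambda>U. U \<union> B"])
    show "(\<lambda>T. T - B) ` {T. B \<subseteq> T \<and> T \<subseteq> M \<and> card T = s} \<subseteq> {U. U \<subseteq> M - B \<and> card U = s - card B}"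
      using assms fB by (auto simp: card_Diff_subset dest: finite_subset)
    show "(\<lambda>U. U \<union> B) ` {U. U \<subseteq> M - B \<and> card U = s - card B} \<subseteq> {T. B \<subseteq> T \<and> T \<subseteq> M \<and> card T = s}"
    proof clarify
      fix U assume U: "U \<subseteq> M - B" "card U = s - card B"
      then have "finite U"
        using assms finite_subset by blast
      with U fB have "card (U \<union> B) = card U + card B"
        by (subst card_Un_disjoint) auto
      then show "B \<subseteq> U \<union> B \<and> U \<union> B \<subseteq> M \<and> card (U \<union> B) = s"
        using U assms by auto
    qed
  qed auto
  then have "card {T. B \<subseteq> T \<and> T \<subseteq> M \<and> card T = s} = card {U. U \<subseteq> M - B \<and> card U = s - card B}"
    by (rule bij_betw_same_card)
  also have "\<dots> = (card M - card B) choose (s - card B)"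
    using assms fB by (simp add: n_subsets card_Diff_subset)
  finally show ?thesis .
qed

lemma card_subsets_containing_two:
  assumes "x < D" "y < D" "2 \<le> s"
  shows "card {T. T \<subseteq> {..<D} \<and> card T = s \<and> x \<in> T \<and> y \<in> T} =
     (if x = y then (D - 1) choose (s - 1) else (D - 2) choose (s - 2))"
proof -
  have "{T. T \<subseteq> {..<D} \<and> card T = s \<and> x \<in> T \<and> y \<in> T} = {T. {x, y} \<subseteq> T \<and> T \<subseteq> {..<D} \<and> card T = s}"
    by auto
  also have "card \<dots> = (card {..<D} - card {x, y}) choose (s - card {x, y})"
    by (rule card_supersets) (use assms in \<open>auto simp: card_insert_if\<close>)
  finally show ?thesis
    by (cases "x = y") (simp_all add: numeral_2_eq_2)
qed

lemma bij_betw_restrict_subset_choices: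
  "bij_betw (\<lambda>S. restrict S parties) {S \<in> subset_choices d s. \<forall>k\<in>parties. P k (S k)}
     (\<Pi>\<^sub>E k\<in>parties. {T. T \<subseteq> {..<d k} \<and> card T = s \<and> P k T})"
  (is "bij_betw _ ?L ?R")
proof (rule bij_betw_byWitness[where f' = "\<lambda>S k. if k \<in> parties then S k else {}"])
  show "\<forall>S\<in>?L. (\<lambda>k. if k \<in> parties then restrict S parties k else {}) = S"
    by (auto simp: subset_choices_def fun_eq_iff)
  show "\<forall>S\<in>?R. restrict (\<lambda>k. if k \<in> parties then S k else {}) parties = S"
    by (auto simp: fun_eq_iff PiE_def extensional_def)
  show "(\<lambda>S. restrict S parties) ` ?L \<subseteq> ?R"
    by (auto simp: subset_choices_def subset_eq)
  show "(\<lambda>S k. if k \<in> parties then S k else {}) ` ?R \<subseteq> ?L"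
    by (auto simp: subset_choices_def PiE_iff subset_eq)
qed

lemma card_subset_choices_filter:
  "card {S \<in> subset_choices d s. \<forall>k\<in>parties. P k (S k)}
     = (\<Prod>k\<in>parties. card {T. T \<subseteq> {..<d k} \<and> card T = s \<and> P k T})"
  using bij_betw_same_card[OF bij_betw_restrict_subset_choices] by (simp add: card_PiE)

lemma finite_subset_choices: "finite (subset_choices d s)"
proof -
  have "finite (\<Pi>\<^sub>E k\<in>parties. {T. T \<subseteq> {..<d k} \<and> card T = s \<and> True})"
    by (intro finite_PiE) auto
  then show ?thesis
    using bij_betw_finite[OF bij_betw_restrict_subset_choices[where P = "\<lambda>_ _. True"]] by simp
qed

lemma binomial_pred_eq:
  assumes "2 \<le> D" "2 \<le> s"
  shows "real ((D - 1) choose (s - 1)) = real (D - 1) / real (s - 1) * real ((D - 2) choose (s - 2))"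
proof -
  have "Suc (D - 2) * ((D - 2) choose (s - 2)) = (Suc (D - 2) choose Suc (s - 2)) * Suc (s - 2)"
    by (rule Suc_times_binomial_eq)
  moreover have "Suc (D - 2) = D - 1" "Suc (s - 2) = s - 1"
    using assms by auto
  ultimately have "real (D - 1) * real ((D - 2) choose (s - 2)) = real ((D - 1) choose (s - 1)) * real (s - 1)"
    by (metis of_nat_mult)
  moreover have "real (s - 1) > 0"
    using assms by simp
  ultimately show ?thesis
    by (simp add: field_simps)
qed

lemma prod_le_two_largest:
  fixes f r :: "nat \<Rightarrow> real"
  assumes f: "\<And>k. k < 4 \<Longrightarrow> 1 \<le> f k \<and> f k \<le> r k"
    and r: "r 0 \<le> r 1" "r 1 \<le> r 2" "r 2 \<le> r 3"
    and jl: "j \<noteq> l" "j < 4" "l < 4" "f j = 1" "f l = 1"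
  shows "f 0 * f 1 * f 2 * f 3 \<le> r 2 * r 3"
proof -
  have pair: "f a * f b \<le> r 2 * r 3" if "a < b" "b < 4" for a b
  proof (rule mult_mono)
    have "a \<in> {0, 1, 2}"
      using that by auto
    then show "f a \<le> r 2"
      using f[of a] that r by auto
    have "b \<in> {1, 2, 3}"
      using that by auto
    then show "f b \<le> r 3"
      using f[of b] that r by auto
  qed (use f[of b] f[of 2] that in auto)
  have "j \<in> {0, 1, 2, 3}" "l \<in> {0, 1, 2, 3}"
    using jl by auto
  then show ?thesis
    using jl pair[of 0 1] pair[of 0 2] pair[of 0 3] pair[of 1 2] pair[of 1 3] pair[of 2 3]
    by (auto simp: ac_simps)
qed

text \<open>The normalisation \<open>N\<^sub>s\<close> of the paper, with parties numbered from 0.\<close>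

definition binom_weight :: "(nat \<Rightarrow> nat) \<Rightarrow> nat \<Rightarrow> real" where
  "binom_weight d s = real ((d 0 - 2) choose (s - 2)) * real ((d 1 - 2) choose (s - 2))
     * real ((d 2 - 1) choose (s - 1)) * real ((d 3 - 1) choose (s - 1))"

lemma binom_weight_pos:
  assumes "2 \<le> s" "s \<le> d 0" "d 0 \<le> d 1" "d 1 \<le> d 2" "d 2 \<le> d 3"
  shows "0 < binom_weight d s"
  unfolding binom_weight_def using assms by (simp add: zero_less_binomial_iff)

text \<open>A substate contains two multi-indices iff every \<open>S k\<close> contains both coordinates, which
  leaves \<open>(d k - 1) choose (s - 1)\<close> choices where they agree and \<open>(d k - 2) choose (s - 2)\<close> where
  they differ; the count is largest when they differ only in the two smallest parties.\<close>

lemma card_subset_choices_containing_le: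
  assumes s: "2 \<le> s" "s \<le> d 0" and d: "d 0 \<le> d 1" "d 1 \<le> d 2" "d 2 \<le> d 3"
    and xy: "\<forall>k\<in>parties. x k < d k \<and> y k < d k"
    and jl: "j \<noteq> l" "j \<in> parties" "l \<in> parties" "x j \<noteq> y j" "x l \<noteq> y l"
  shows "real (card {S \<in> subset_choices d s. \<forall>k\<in>parties. x k \<in> S k \<and> y k \<in> S k}) \<le> binom_weight d s"
proof -
  define u where "u k = real ((d k - 2) choose (s - 2))" for k
  define r where "r k = real (d k - 1) / real (s - 1)" for k
  define f where "f k = (if x k = y k then r k else 1)" for k
  have ds: "s \<le> d k" if "k < 4" for k
  proof -
    have "k \<in> {0, 1, 2, 3}"
      using that by auto
    then show ?thesis
      using s d by auto
  qed
  have d2: "2 \<le> d k" if "k < 4" for k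
    using ds[OF that] s by simp
  have count: "real (card {T. T \<subseteq> {..<d k} \<and> card T = s \<and> x k \<in> T \<and> y k \<in> T}) = f k * u k"
    if "k < 4" for k
    using card_subsets_containing_two[of "x k" "d k" "y k" s] binomial_pred_eq[OF d2[OF that] s(1)]
      xy that s by (auto simp: f_def u_def r_def parties_def)
  have "real (card {S \<in> subset_choices d s. \<forall>k\<in>parties. x k \<in> S k \<and> y k \<in> S k})
      = (\<Prod>k\<in>parties. real (card {T. T \<subseteq> {..<d k} \<and> card T = s \<and> x k \<in> T \<and> y k \<in> T}))"
    using card_subset_choices_filter[of d s "\<lambda>k T. x k \<in> T \<and> y k \<in> T"] by simp
  also have "\<dots> = (f 0 * f 1 * f 2 * f 3) * (u 0 * u 1 * u 2 * u 3)"
    by (simp add: parties_eq count)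
  also have "\<dots> \<le> (r 2 * r 3) * (u 0 * u 1 * u 2 * u 3)"
  proof (rule mult_right_mono[OF prod_le_two_largest[where j = j and l = l]])
    have "1 \<le> r k" if "k < 4" for k
      using ds[OF that] s by (auto simp: r_def field_simps)
    then show "1 \<le> f k \<and> f k \<le> r k" if "k < 4" for k
      using that by (auto simp: f_def)
    show "r 0 \<le> r 1" "r 1 \<le> r 2" "r 2 \<le> r 3"
      unfolding r_def using d by (auto intro!: divide_right_mono)
  qed (use jl in \<open>auto simp: f_def parties_def u_def\<close>)
  also have "\<dots> = binom_weight d s"
    using binomial_pred_eq[OF d2 s(1), of 2] binomial_pred_eq[OF d2 s(1), of 3]
    by (simp add: binom_weight_def u_def r_def)
  finally show ?thesis .
qed

definition project :: "(nat \<Rightarrow> nat set) \<Rightarrow> qvec \<Rightarrow> qvec" where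
  "project S \<psi> i = (if \<forall>k\<in>parties. i k \<in> S k then \<psi> i else 0)"

lemma minor_project:
  "minor A (project S \<psi>) a a' b b' =
    (if \<forall>k\<in>parties. merge A a b k \<in> S k \<and> merge A a' b' k \<in> S k then minor A \<psi> a a' b b' else 0)"
proof -
  have in_S: "(\<forall>k\<in>parties. merge A a b k \<in> S k) \<longleftrightarrow>
      (\<forall>k\<in>parties \<inter> A. a k \<in> S k) \<and> (\<forall>k\<in>parties - A. b k \<in> S k)" for a b
    unfolding merge_def by auto
  have "(\<forall>k\<in>parties. merge A a b k \<in> S k \<and> merge A a' b' k \<in> S k) \<longleftrightarrow>
      (\<forall>k\<in>parties. merge A a b k \<in> S k) \<and> (\<forall>k\<in>parties. merge A a' b' k \<in> S k)"
    by blast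
  then show ?thesis
    unfolding minor_def project_def in_S by auto
qed

lemma sum_minor_sum_project:
  "(\<Sum>S\<in>subset_choices d s. minor_sum d A (project S \<psi>)) =
   (\<Sum>a\<in>box d A. \<Sum>a'\<in>box d A. \<Sum>b\<in>box d (parties - A). \<Sum>b'\<in>box d (parties - A).
      real (card {S \<in> subset_choices d s. \<forall>k\<in>parties. merge A a b k \<in> S k \<and> merge A a' b' k \<in> S k})
      * (cmod (minor A \<psi> a a' b b'))\<^sup>2)"
proof -
  have "(\<Sum>S\<in>subset_choices d s. minor_sum d A (project S \<psi>)) =
      (\<Sum>a\<in>box d A. \<Sum>a'\<in>box d A. \<Sum>b\<in>box d (parties - A). \<Sum>b'\<in>box d (parties - A).
       \<Sum>S\<in>subset_choices d s. if \<forall>k\<in>parties. merge A a b k \<in> S k \<and> merge A a' b' k \<in> S k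
         then (cmod (minor A \<psi> a a' b b'))\<^sup>2 else 0)"
    unfolding minor_sum_def minor_project
    by (simp only: sum.swap[where A = "subset_choices d s"] if_distrib[of "\<lambda>z. (cmod z)\<^sup>2"] norm_zero)
      (simp only: zero_power2)
  also have "\<dots> = (\<Sum>a\<in>box d A. \<Sum>a'\<in>box d A. \<Sum>b\<in>box d (parties - A). \<Sum>b'\<in>box d (parties - A).
      real (card {S \<in> subset_choices d s. \<forall>k\<in>parties. merge A a b k \<in> S k \<and> merge A a' b' k \<in> S k})
      * (cmod (minor A \<psi> a a' b b'))\<^sup>2)"
    by (intro sum.cong refl) (simp add: sum.inter_filter[symmetric] finite_subset_choices)
  finally show ?thesis .
qed

text \<open>A minor vanishes unless its two multi-indices differ both inside and outside \<open>A\<close>.\<close>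

lemma sum_minor_sum_project_le:
  assumes A: "A \<subseteq> parties"
    and s: "2 \<le> s" "s \<le> d 0" and d: "d 0 \<le> d 1" "d 1 \<le> d 2" "d 2 \<le> d 3"
  shows "(\<Sum>S\<in>subset_choices d s. minor_sum d A (project S \<psi>)) \<le> binom_weight d s * minor_sum d A \<psi>"
  unfolding sum_minor_sum_project unfolding minor_sum_def sum_distrib_left
proof (intro sum_mono)
  fix a a' b b' assume a: "a \<in> box d A" "a' \<in> box d A" and b: "b \<in> box d (parties - A)" "b' \<in> box d (parties - A)"
  show "real (card {S \<in> subset_choices d s. \<forall>k\<in>parties. merge A a b k \<in> S k \<and> merge A a' b' k \<in> S k})
      * (cmod (minor A \<psi> a a' b b'))\<^sup>2 \<le> binom_weight d s * (cmod (minor A \<psi> a a' b b'))\<^sup>2"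
  proof (cases "a = a' \<or> b = b'")
    case True
    then have "minor A \<psi> a a' b b' = 0"
      unfolding minor_def by (auto simp: mult.commute)
    then show ?thesis by simp
  next
    case False
    then obtain j l where j: "j \<in> A" "a j \<noteq> a' j" and l: "l \<in> parties - A" "b l \<noteq> b' l"
      using box_neq_ex_coord[OF a] box_neq_ex_coord[OF b] by blast
    have "real (card {S \<in> subset_choices d s. \<forall>k\<in>parties. merge A a b k \<in> S k \<and> merge A a' b' k \<in> S k})
        \<le> binom_weight d s"
      by (rule card_subset_choices_containing_le[OF s d, where j = j and l = l])
        (use a b j l A in \<open>auto simp: merge_def box_def\<close>)
    then show ?thesis
      by (intro mult_right_mono) auto
  qed
qed

lemma sum_conc_pure_project_sq_le:
  assumes s: "2 \<le> s" "s \<le> d 0" and d: "d 0 \<le> d 1" "d 1 \<le> d 2" "d 2 \<le> d 3"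
  shows "(\<Sum>S\<in>subset_choices d s. (conc_pure d (project S \<psi>))\<^sup>2) \<le> binom_weight d s * (conc_pure d \<psi>)\<^sup>2"
proof -
  have "(\<Sum>S\<in>subset_choices d s. (conc_pure d (project S \<psi>))\<^sup>2) =
      (\<Sum>A\<in>bipartitions. \<Sum>S\<in>subset_choices d s. minor_sum d A (project S \<psi>)) / 8"
    unfolding conc_pure_sq
    by (simp add: sum_divide_distrib[symmetric] sum.swap[where A = "subset_choices d s"])
  also have "\<dots> \<le> (\<Sum>A\<in>bipartitions. binom_weight d s * minor_sum d A \<psi>) / 8"
    by (intro divide_right_mono sum_mono sum_minor_sum_project_le[OF _ s d]) (auto simp: bipartitions_def)
  also have "\<dots> = binom_weight d s * (conc_pure d \<psi>)\<^sup>2"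
    unfolding conc_pure_sq by (simp add: sum_distrib_left)
  finally show ?thesis .
qed

definition quad_form :: "'a set \<Rightarrow> ('a \<Rightarrow> 'a \<Rightarrow> complex) \<Rightarrow> ('a \<Rightarrow> complex) \<Rightarrow> complex" where
  "quad_form I \<sigma> v = (\<Sum>i\<in>I. \<Sum>j\<in>I. cnj (v i) * \<sigma> i j * v j)"

definition psd_on :: "'a set \<Rightarrow> ('a \<Rightarrow> 'a \<Rightarrow> complex) \<Rightarrow> bool" where
  "psd_on I \<sigma> \<longleftrightarrow> (\<forall>i\<in>I. \<forall>j\<in>I. \<sigma> j i = cnj (\<sigma> i j)) \<and> (\<forall>v. 0 \<le> Re (quad_form I \<sigma> v))"

lemma quad_form_insert:
  assumes "finite F" "x \<notin> F"
  shows "quad_form (insert x F) \<sigma> v = cnj (v x) * \<sigma> x x * v x + (\<Sum>j\<in>F. cnj (v x) * \<sigma> x j * v j)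
     + (\<Sum>i\<in>F. cnj (v i) * \<sigma> i x * v x) + quad_form F \<sigma> v"
  unfolding quad_form_def using assms by (simp add: sum.distrib algebra_simps)

lemma quad_form_cong: "(\<And>i. i \<in> I \<Longrightarrow> v i = v' i) \<Longrightarrow> quad_form I \<sigma> v = quad_form I \<sigma> v'"
  unfolding quad_form_def by (intro sum.cong refl) auto

lemma quad_form_supported:
  assumes "finite I" "K \<subseteq> I" "\<And>i. i \<notin> K \<Longrightarrow> v i = 0"
  shows "quad_form I \<sigma> v = quad_form K \<sigma> v"
proof -
  have "(\<Sum>i\<in>I. \<Sum>j\<in>I. cnj (v i) * \<sigma> i j * v j) = (\<Sum>i\<in>K. \<Sum>j\<in>I. cnj (v i) * \<sigma> i j * v j)"
    by (rule sum.mono_neutral_right) (use assms in auto)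
  also have "\<dots> = (\<Sum>i\<in>K. \<Sum>j\<in>K. cnj (v i) * \<sigma> i j * v j)"
    by (intro sum.cong refl sum.mono_neutral_right) (use assms in auto)
  finally show ?thesis
    unfolding quad_form_def .
qed

lemma psd_on_diag_nonneg:
  assumes "finite I" "psd_on I \<sigma>" "x \<in> I"
  shows "0 \<le> Re (\<sigma> x x)"
proof -
  have "quad_form I \<sigma> (\<lambda>i. if i = x then 1 else 0) = quad_form {x} \<sigma> (\<lambda>i. if i = x then 1 else 0)"
    by (rule quad_form_supported) (use assms in auto)
  also have "\<dots> = \<sigma> x x"
    by (simp add: quad_form_def)
  finally show ?thesis
    using assms(2) unfolding psd_on_def by metis
qed

text \<open>Testing against \<open>t a e\<^sub>x - e\<^sub>j\<close> with \<open>a = \<sigma> x j\<close> gives \<open>\<sigma> j j - 2 t |a|\<^sup>2\<close>, negative for large \<open>t\<close>.\<close>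

lemma psd_on_diag_zero_imp_row_zero:
  assumes fin: "finite I" and psd: "psd_on I \<sigma>" and xj: "x \<in> I" "j \<in> I"
    and z: "\<sigma> x x = 0"
  shows "\<sigma> x j = 0"
proof (rule ccontr)
  assume a0: "\<sigma> x j \<noteq> 0"
  then have xj': "x \<noteq> j"
    using z by auto
  define a where "a = \<sigma> x j"
  have ja: "\<sigma> j x = cnj a"
    using psd xj unfolding psd_on_def a_def by blast
  have na: "cnj a * a = of_real ((cmod a)\<^sup>2)"
    by (simp only: complex_norm_square mult.commute)
  have pa: "(cmod a)\<^sup>2 > 0"
    using a0 unfolding a_def by simp
  define t where "t = (Re (\<sigma> j j) + 1) / (2 * (cmod a)\<^sup>2)"
  define v where "v i = (if i = x then - (of_real t) * a else if i = j then 1 else 0)" for i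
  have "quad_form I \<sigma> v = quad_form {x, j} \<sigma> v"
    by (rule quad_form_supported) (use fin xj in \<open>auto simp: v_def\<close>)
  also have "\<dots> = \<sigma> j j - 2 * of_real t * (cnj a * a)"
    using xj' unfolding quad_form_def v_def by (simp add: z ja a_def[symmetric] algebra_simps)
  finally have "Re (quad_form I \<sigma> v) = Re (\<sigma> j j) - 2 * t * (cmod a)\<^sup>2"
    unfolding na by simp
  also have "\<dots> = -1"
    unfolding t_def using pa by (simp add: field_simps)
  finally show False
    using psd unfolding psd_on_def by (metis neg_0_le_iff_le not_one_le_zero)
qed

lemma quad_form_schur_complement:
  assumes fin: "finite F" and x: "x \<notin> F"
    and herm: "\<forall>i\<in>insert x F. \<forall>j\<in>insert x F. \<sigma> j i = cnj (\<sigma> i j)"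
    and r: "\<sigma> x x = of_real r" "r \<noteq> 0"
  shows "quad_form F (\<lambda>i j. \<sigma> i j - \<sigma> i x * cnj (\<sigma> j x) / of_real r) v
       = quad_form (insert x F) \<sigma> (v(x := - (\<Sum>j\<in>F. \<sigma> x j * v j) / of_real r))"
proof -
  define w where "w = (\<Sum>j\<in>F. \<sigma> x j * v j)"
  define y where "y = - w / of_real r"
  define v' where "v' = v(x := y)"
  have v'F: "\<And>i. i \<in> F \<Longrightarrow> v' i = v i"
    using x unfolding v'_def by auto
  have hx: "\<And>i. i \<in> F \<Longrightarrow> \<sigma> i x = cnj (\<sigma> x i)"
    using herm by blast
  have cw: "(\<Sum>i\<in>F. cnj (v i) * \<sigma> i x) = cnj w"
    unfolding w_def cnj_sum by (intro sum.cong refl) (simp add: hx mult.commute)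
  have w: "(\<Sum>j\<in>F. cnj (\<sigma> j x) * v j) = w"
    unfolding w_def by (intro sum.cong refl) (simp add: hx)
  have "quad_form (insert x F) \<sigma> v' = cnj y * of_real r * y + cnj y * w + cnj w * y + quad_form F \<sigma> v"
  proof -
    have "(\<Sum>j\<in>F. cnj (v' x) * \<sigma> x j * v' j) = cnj y * w"
      using x unfolding w_def sum_distrib_left by (intro sum.cong refl) (auto simp: v'_def)
    moreover have "(\<Sum>i\<in>F. cnj (v' i) * \<sigma> i x * v' x) = cnj w * y"
      using x unfolding cw[symmetric] sum_distrib_right by (intro sum.cong refl) (auto simp: v'_def)
    moreover have "quad_form F \<sigma> v' = quad_form F \<sigma> v"
      by (rule quad_form_cong) (simp add: v'F)
    ultimately show ?thesis
      unfolding quad_form_insert[OF fin x] by (simp add: v'_def r(1))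
  qed
  also have "\<dots> = quad_form F \<sigma> v - cnj w * w / of_real r"
    unfolding y_def using r(2) by (simp add: field_simps)
  also have "\<dots> = quad_form F (\<lambda>i j. \<sigma> i j - \<sigma> i x * cnj (\<sigma> j x) / of_real r) v"
  proof -
    have "(\<Sum>i\<in>F. \<Sum>j\<in>F. cnj (v i) * (\<sigma> i x * cnj (\<sigma> j x) / of_real r) * v j)
        = (\<Sum>i\<in>F. cnj (v i) * \<sigma> i x) * (\<Sum>j\<in>F. cnj (\<sigma> j x) * v j) / of_real r"
      unfolding sum_product by (simp add: sum_divide_distrib mult_ac)
    then show ?thesis
      unfolding quad_form_def cw w by (simp add: algebra_simps sum_subtractf)
  qed
  finally show ?thesis
    unfolding v'_def y_def w_def by simp
qed

lemma psd_on_subset: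
  assumes "finite I" "psd_on I \<sigma>" "F \<subseteq> I"
  shows "psd_on F \<sigma>"
  unfolding psd_on_def
proof (intro conjI allI)
  show "\<forall>i\<in>F. \<forall>j\<in>F. \<sigma> j i = cnj (\<sigma> i j)"
    using assms unfolding psd_on_def by blast
  fix v
  have "quad_form I \<sigma> (\<lambda>i. if i \<in> F then v i else 0) = quad_form F \<sigma> (\<lambda>i. if i \<in> F then v i else 0)"
    by (rule quad_form_supported) (use assms in auto)
  also have "\<dots> = quad_form F \<sigma> v"
    by (rule quad_form_cong) simp
  finally show "0 \<le> Re (quad_form F \<sigma> v)"
    using assms(2) unfolding psd_on_def by metis
qed

lemma psd_on_schur_complement:
  assumes fin: "finite F" and x: "x \<notin> F" and psd: "psd_on (insert x F) \<sigma>"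
    and r: "\<sigma> x x = of_real r" "r \<noteq> 0"
  shows "psd_on F (\<lambda>i j. \<sigma> i j - \<sigma> i x * cnj (\<sigma> j x) / of_real r)"
  unfolding psd_on_def
proof (intro conjI ballI allI)
  have herm: "\<forall>i\<in>insert x F. \<forall>j\<in>insert x F. \<sigma> j i = cnj (\<sigma> i j)"
    using psd unfolding psd_on_def by blast
  fix v
  show "0 \<le> Re (quad_form F (\<lambda>i j. \<sigma> i j - \<sigma> i x * cnj (\<sigma> j x) / of_real r) v)"
    unfolding quad_form_schur_complement[OF fin x herm r]
    using psd unfolding psd_on_def by blast
next
  fix i j assume "i \<in> F" "j \<in> F"
  then have "\<sigma> j i = cnj (\<sigma> i j)"
    using psd unfolding psd_on_def by blast
  then show "\<sigma> j i - \<sigma> j x * cnj (\<sigma> i x) / of_real r = cnj (\<sigma> i j - \<sigma> i x * cnj (\<sigma> j x) / of_real r)"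
    by (simp add: mult.commute)
qed

text \<open>One step of a Cholesky factorisation: subtracting \<open>|\<phi>\<rangle>\<langle>\<phi>|\<close> with \<open>\<phi> = \<sigma> e\<^sub>x / \<surd>\<sigma>\<^sub>x\<^sub>x\<close>
  clears row and column \<open>x\<close> and leaves the positive Schur complement.\<close>

lemma psd_on_rank_one_reduction:
  assumes fin: "finite F" and x: "x \<notin> F" and psd: "psd_on (insert x F) \<sigma>"
  obtains \<phi> where "\<forall>j\<in>insert x F. \<sigma> x j = \<phi> x * cnj (\<phi> j) \<and> \<sigma> j x = \<phi> j * cnj (\<phi> x)"
    and "psd_on F (\<lambda>i j. \<sigma> i j - \<phi> i * cnj (\<phi> j))"
proof -
  have herm: "\<forall>i\<in>insert x F. \<forall>j\<in>insert x F. \<sigma> j i = cnj (\<sigma> i j)"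
    using psd unfolding psd_on_def by blast
  define r where "r = Re (\<sigma> x x)"
  have r0: "0 \<le> r"
    unfolding r_def by (rule psd_on_diag_nonneg) (use fin psd in auto)
  have "\<sigma> x x = cnj (\<sigma> x x)"
    using herm by blast
  then have rx: "\<sigma> x x = of_real r"
    unfolding r_def by (simp add: complex_eq_iff)
  show ?thesis
  proof (cases "r = 0")
    case True
    have "\<sigma> x j = 0 \<and> \<sigma> j x = 0" if "j \<in> insert x F" for j
    proof -
      have "\<sigma> x j = 0"
        by (rule psd_on_diag_zero_imp_row_zero[OF _ psd _ that]) (use fin rx True in auto)
      moreover have "\<sigma> j x = cnj (\<sigma> x j)"
        using herm that by blast
      ultimately show ?thesis by simp
    qed
    moreover have "psd_on F \<sigma>"
      using psd_on_subset[OF _ psd] fin by blast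
    ultimately show ?thesis
      by (intro that[of "\<lambda>_. 0"]) auto
  next
    case False
    define \<phi> where "\<phi> j = \<sigma> j x / of_real (sqrt r)" for j
    have \<phi>\<phi>: "\<phi> i * cnj (\<phi> j) = \<sigma> i x * cnj (\<sigma> j x) / of_real r" for i j
      using r0 by (simp add: \<phi>_def flip: of_real_mult)
    show ?thesis
    proof (rule that)
      show "\<forall>j\<in>insert x F. \<sigma> x j = \<phi> x * cnj (\<phi> j) \<and> \<sigma> j x = \<phi> j * cnj (\<phi> x)"
      proof
        fix j assume "j \<in> insert x F"
        then have "\<sigma> x j = cnj (\<sigma> j x)"
          using herm by blast
        then have "cnj (\<sigma> j x) = \<sigma> x j"
          by simp
        then show "\<sigma> x j = \<phi> x * cnj (\<phi> j) \<and> \<sigma> j x = \<phi> j * cnj (\<phi> x)"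
          using False by (simp add: \<phi>\<phi> rx)
      qed
      show "psd_on F (\<lambda>i j. \<sigma> i j - \<phi> i * cnj (\<phi> j))"
        unfolding \<phi>\<phi> by (rule psd_on_schur_complement[OF fin x psd rx False])
    qed
  qed
qed

lemma psd_on_gram:
  assumes "finite I" "psd_on I \<sigma>"
  shows "\<exists>(n::nat) \<psi>. \<forall>i\<in>I. \<forall>j\<in>I. \<sigma> i j = (\<Sum>k<n. \<psi> k i * cnj (\<psi> k j))"
  using assms
proof (induction I arbitrary: \<sigma> rule: finite_induct)
  case empty
  then show ?case by auto
next
  case (insert x F \<sigma>)
  obtain \<phi> where row: "\<forall>j\<in>insert x F. \<sigma> x j = \<phi> x * cnj (\<phi> j) \<and> \<sigma> j x = \<phi> j * cnj (\<phi> x)"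
    and psd: "psd_on F (\<lambda>i j. \<sigma> i j - \<phi> i * cnj (\<phi> j))"
    using psd_on_rank_one_reduction[OF insert.hyps insert.prems] .
  obtain n :: nat and \<psi> where \<psi>: "\<forall>i\<in>F. \<forall>j\<in>F. \<sigma> i j - \<phi> i * cnj (\<phi> j) = (\<Sum>k<n. \<psi> k i * cnj (\<psi> k j))"
    using insert.IH[OF psd] by blast
  define \<psi>' where "\<psi>' k = (if k < n then (\<psi> k)(x := 0) else \<phi>)" for k
  have "\<sigma> i j = (\<Sum>k<Suc n. \<psi>' k i * cnj (\<psi>' k j))" if "i \<in> insert x F" "j \<in> insert x F" for i j
  proof -
    have "(\<Sum>k<Suc n. \<psi>' k i * cnj (\<psi>' k j))
        = (\<Sum>k<n. ((\<psi> k)(x := 0)) i * cnj (((\<psi> k)(x := 0)) j)) + \<phi> i * cnj (\<phi> j)"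
      by (simp add: \<psi>'_def)
    also have "\<dots> = \<sigma> i j"
    proof (cases "i = x \<or> j = x")
      case True
      then show ?thesis
        using that row by auto
    next
      case False
      then have "\<sigma> i j - \<phi> i * cnj (\<phi> j) = (\<Sum>k<n. \<psi> k i * cnj (\<psi> k j))"
        using that \<psi> by blast
      then show ?thesis
        using False by (simp add: diff_eq_eq)
    qed
    finally show ?thesis ..
  qed
  then show ?case by blast
qed

definition is_decomp :: "(nat \<Rightarrow> nat) \<Rightarrow> qop \<Rightarrow> nat \<Rightarrow> (nat \<Rightarrow> qvec) \<Rightarrow> bool" where
  "is_decomp d \<sigma> n \<psi> \<longleftrightarrow> (\<forall>i\<in>box d parties. \<forall>j\<in>box d parties. \<sigma> i j = (\<Sum>k<n. \<psi> k i * cnj (\<psi> k j)))"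

lemma conc_mixed_eq_Inf: "conc_mixed d \<sigma> = Inf {(\<Sum>k<n. conc_pure d (\<psi> k)) | n \<psi>. is_decomp d \<sigma> n \<psi>}"
  unfolding conc_mixed_def is_decomp_def ..

lemma conc_mixed_le_decomp: "is_decomp d \<sigma> n \<psi> \<Longrightarrow> conc_mixed d \<sigma> \<le> (\<Sum>k<n. conc_pure d (\<psi> k))"
  unfolding conc_mixed_eq_Inf
  by (rule cInf_lower) (auto intro!: bdd_belowI[where m = 0] sum_nonneg conc_pure_nonneg)

lemma conc_mixed_greatest:
  assumes "is_decomp d \<sigma> n0 \<psi>0" "\<And>n \<psi>. is_decomp d \<sigma> n \<psi> \<Longrightarrow> c \<le> (\<Sum>k<n. conc_pure d (\<psi> k))"
  shows "c \<le> conc_mixed d \<sigma>"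
  unfolding conc_mixed_eq_Inf by (rule cInf_greatest) (use assms in auto)

lemma conc_mixed_nonneg: "is_decomp d \<sigma> n \<psi> \<Longrightarrow> 0 \<le> conc_mixed d \<sigma>"
  by (rule conc_mixed_greatest) (auto intro: sum_nonneg conc_pure_nonneg)

lemma density_op_decomp: "density_op d \<rho> \<Longrightarrow> \<exists>n \<psi>. is_decomp d \<rho> n \<psi>"
  using psd_on_gram[OF finite_box[OF finite_parties, of d], where \<sigma> = \<rho>]
  unfolding density_op_def psd_on_def quad_form_def is_decomp_def by blast

lemma is_decomp_substate:
  assumes "is_decomp d \<rho> n \<psi>"
  shows "is_decomp d (substate S \<rho>) n (\<lambda>k. project S (\<psi> k))"
  unfolding is_decomp_def
proof (intro ballI)
  define inS where "inS i \<longleftrightarrow> (\<forall>k\<in>parties. i k \<in> S k)" for i :: midx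
  have sub: "substate S \<rho> i j = (if inS i \<and> inS j then \<rho> i j else 0)"
    and proj: "project S \<phi> i = (if inS i then \<phi> i else 0)" for i j \<phi>
    by (auto simp: substate_def project_def inS_def)
  fix i j assume "i \<in> box d parties" "j \<in> box d parties"
  then show "substate S \<rho> i j = (\<Sum>k<n. project S (\<psi> k) i * cnj (project S (\<psi> k) j))"
    using assms unfolding is_decomp_def sub proj by (cases "inS i"; cases "inS j") simp_all
qed

lemma L2_set_sum_le: "L2_set (\<lambda>x. \<Sum>k<(n::nat). f x k) X \<le> (\<Sum>k<n. L2_set (\<lambda>x. f x k) X)"
proof (induction n)
  case (Suc n)
  have "L2_set (\<lambda>x. \<Sum>k<Suc n. f x k) X \<le> L2_set (\<lambda>x. \<Sum>k<n. f x k) X + L2_set (\<lambda>x. f x n) X"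
    using L2_set_triangle_ineq by simp
  with Suc show ?case by simp
qed (simp add: L2_set_def)

text \<open>Minkowski's inequality in \<open>\<ell>\<^sup>2\<close> over the substates, applied to the projected decomposition.\<close>

lemma L2_set_conc_mixed_substate_le:
  assumes dec: "is_decomp d \<rho> n \<psi>"
    and s: "2 \<le> s" "s \<le> d 0" and dims: "d 0 \<le> d 1" "d 1 \<le> d 2" "d 2 \<le> d 3"
  shows "L2_set (\<lambda>S. conc_mixed d (substate S \<rho>)) (subset_choices d s)
      \<le> sqrt (binom_weight d s) * (\<Sum>k<n. conc_pure d (\<psi> k))"
proof -
  have "L2_set (\<lambda>S. conc_mixed d (substate S \<rho>)) (subset_choices d s)
      \<le> L2_set (\<lambda>S. \<Sum>k<n. conc_pure d (project S (\<psi> k))) (subset_choices d s)"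
    by (rule L2_set_mono) (use is_decomp_substate[OF dec] in \<open>auto intro: conc_mixed_le_decomp conc_mixed_nonneg\<close>)
  also have "\<dots> \<le> (\<Sum>k<n. L2_set (\<lambda>S. conc_pure d (project S (\<psi> k))) (subset_choices d s))"
    by (rule L2_set_sum_le)
  also have "\<dots> \<le> (\<Sum>k<n. sqrt (binom_weight d s * (conc_pure d (\<psi> k))\<^sup>2))"
    unfolding L2_set_def by (intro sum_mono real_sqrt_le_mono sum_conc_pure_project_sq_le[OF s dims])
  also have "\<dots> = sqrt (binom_weight d s) * (\<Sum>k<n. conc_pure d (\<psi> k))"
    by (simp add: real_sqrt_mult conc_pure_nonneg sum_distrib_left)
  finally show ?thesis .
qed

lemma sum_conc_mixed_substate_sq_le:
  assumes \<rho>: "density_op d \<rho>"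
    and s: "2 \<le> s" "s \<le> d 0" and dims: "d 0 \<le> d 1" "d 1 \<le> d 2" "d 2 \<le> d 3"
  shows "(\<Sum>S\<in>subset_choices d s. (conc_mixed d (substate S \<rho>))\<^sup>2) \<le> binom_weight d s * (conc_mixed d \<rho>)\<^sup>2"
proof -
  define L where "L = L2_set (\<lambda>S. conc_mixed d (substate S \<rho>)) (subset_choices d s)"
  have N: "0 < binom_weight d s"
    by (rule binom_weight_pos[OF s dims])
  obtain n \<psi> where dec: "is_decomp d \<rho> n \<psi>"
    using density_op_decomp[OF \<rho>] by blast
  have "L / sqrt (binom_weight d s) \<le> conc_mixed d \<rho>"
    by (rule conc_mixed_greatest[OF dec])
      (use L2_set_conc_mixed_substate_le[OF _ s dims] N in \<open>auto simp: L_def field_simps\<close>)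
  then have "L \<le> sqrt (binom_weight d s) * conc_mixed d \<rho>"
    using N by (simp add: field_simps)
  then have "L\<^sup>2 \<le> (sqrt (binom_weight d s) * conc_mixed d \<rho>)\<^sup>2"
    by (rule power_mono) (simp add: L_def)
  also have "\<dots> = binom_weight d s * (conc_mixed d \<rho>)\<^sup>2"
    using N by (simp add: power_mult_distrib)
  finally show ?thesis
    unfolding L_def L2_set_def by (simp add: sum_nonneg)
qed

theorem corollary1:
  fixes d :: "nat \<Rightarrow> nat" and \<rho> :: qop and m :: nat and p :: "nat \<Rightarrow> real"
  assumes "2 \<le> d 0" "d 0 \<le> d 1" "d 1 \<le> d 2" "d 2 \<le> d 3"
    and "density_op d \<rho>"
    and "2 \<le> m" "m \<le> d 0"
    and "\<forall>s\<in>{2..m}. 0 \<le> p s \<and> p s \<le> 1"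
    and "(\<Sum>s=2..m. p s) = 1"
  shows "(conc_mixed d \<rho>)\<^sup>2 \<ge>
    (\<Sum>s=2..m. p s / (real ((d 0 - 2) choose (s - 2)) * real ((d 1 - 2) choose (s - 2))
                        * real ((d 2 - 1) choose (s - 1)) * real ((d 3 - 1) choose (s - 1)))
       * (\<Sum>S\<in>subset_choices d s. (conc_mixed d (substate S \<rho>))\<^sup>2))"
proof -
  have "p s / binom_weight d s * (\<Sum>S\<in>subset_choices d s. (conc_mixed d (substate S \<rho>))\<^sup>2)
      \<le> p s * (conc_mixed d \<rho>)\<^sup>2" if "s \<in> {2..m}" for s
  proof -
    have s: "2 \<le> s" "s \<le> d 0"
      using that assms by auto
    have N: "0 < binom_weight d s"
      by (rule binom_weight_pos[OF s assms(2-4)])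
    have "p s / binom_weight d s * (\<Sum>S\<in>subset_choices d s. (conc_mixed d (substate S \<rho>))\<^sup>2)
        \<le> p s / binom_weight d s * (binom_weight d s * (conc_mixed d \<rho>)\<^sup>2)"
      by (rule mult_left_mono[OF sum_conc_mixed_substate_sq_le[OF assms(5) s assms(2-4)]])
        (use assms(8) that N in simp)
    also have "\<dots> = p s * (conc_mixed d \<rho>)\<^sup>2"
      using N by simp
    finally show ?thesis .
  qed
  then have "(\<Sum>s=2..m. p s / binom_weight d s * (\<Sum>S\<in>subset_choices d s. (conc_mixed d (substate S \<rho>))\<^sup>2))
      \<le> (\<Sum>s=2..m. p s) * (conc_mixed d \<rho>)\<^sup>2"
    unfolding sum_distrib_right by (rule sum_mono)
  then show ?thesis
    using assms(9) by (simp add: binom_weight_def)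
qed

end
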